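(* Let $\mathcal{G}$ be a hereditary class of graphs (i.e., $G\in\mathcal{G}$ implies $G'\in\mathcal{G}$ for every subgraph $G'$ of $G$) such that $|E(G)|\le \ell\cdot|V(G)|$ for every $G\in\mathcal{G}$, for some constant $\ell$. Then for every $G\in\mathcal{G}$ and every terminal set $\mathcal{T}\subseteq V(G)$, $\mathrm{DegCost}^*(\mathcal{T})\le 2\ell\cdot q^*(\mathcal{T})$.
   Context: For $u\in V(G)$, $N[u]$ is $u$ together with its neighbors; for a subgraph $G'$, $N[G']=\bigcup_{u\in V(G')}N[u]$ and $\mathrm{Cost}(G')=|N[G']|$. $\mathrm{DegCost}(G')$ is the sum over nodes of $G'$ of their degrees in $G$. A Steiner tree for $\mathcal{T}$ is a tree $T\subseteq G$ with $\mathcal{T}\subseteq V(T)$. $q^*(\mathcal{T})=\min\mathrm{Cost}(T)$ and $\mathrm{DegCost}^*(\mathcal{T})=\min\mathrm{DegCost}(T)$, both minima over Steiner trees $T$ for $\mathcal{T}$. *)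

theory Defs
  imports Complex_Main
begin

type_synonym 'a graph = "'a set \<times> 'a set set"

abbreviation verts :: "'a graph \<Rightarrow> 'a set" where "verts G \<equiv> fst G"
abbreviation edges :: "'a graph \<Rightarrow> 'a set set" where "edges G \<equiv> snd G"

definition wf_graph :: "'a graph \<Rightarrow> bool" where
  "wf_graph G \<longleftrightarrow> finite (verts G) \<and>
     (\<forall>e\<in>edges G. \<exists>u v. e = {u, v} \<and> u \<noteq> v \<and> u \<in> verts G \<and> v \<in> verts G)"

definition subgraph :: "'a graph \<Rightarrow> 'a graph \<Rightarrow> bool" where
  "subgraph H G \<longleftrightarrow> wf_graph H \<and> verts H \<subseteq> verts G \<and> edges H \<subseteq> edges G"

definition hereditary :: "'a graph set \<Rightarrow> bool" where
  "hereditary \<G> \<longleftrightarrow> (\<forall>G\<in>\<G>. wf_graph G) \<and> (\<forall>G\<in>\<G>. \<forall>H. subgraph H G \<longrightarrow> H \<in> \<G>)"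

definition adj :: "'a graph \<Rightarrow> ('a \<times> 'a) set" where
  "adj G = {(u, v). {u, v} \<in> edges G}"

definition connected_graph :: "'a graph \<Rightarrow> bool" where
  "connected_graph G \<longleftrightarrow> verts G \<noteq> {} \<and>
     (\<forall>u\<in>verts G. \<forall>v\<in>verts G. (u, v) \<in> (adj G)\<^sup>*)"

definition has_cycle :: "'a graph \<Rightarrow> bool" where
  "has_cycle G \<longleftrightarrow> (\<exists>xs. length xs \<ge> 3 \<and> distinct xs \<and>
     (\<forall>i. i + 1 < length xs \<longrightarrow> {xs ! i, xs ! (i + 1)} \<in> edges G) \<and>
     {last xs, hd xs} \<in> edges G)"

definition is_tree :: "'a graph \<Rightarrow> bool" where
  "is_tree T \<longleftrightarrow> connected_graph T \<and> \<not> has_cycle T"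

definition closed_nbhd :: "'a graph \<Rightarrow> 'a \<Rightarrow> 'a set" where
  "closed_nbhd G u = insert u {v. {u, v} \<in> edges G}"

definition degree :: "'a graph \<Rightarrow> 'a \<Rightarrow> nat" where
  "degree G u = card {v. {u, v} \<in> edges G}"

definition Cost :: "'a graph \<Rightarrow> 'a graph \<Rightarrow> nat" where
  "Cost G H = card (\<Union>u\<in>verts H. closed_nbhd G u)"

definition DegCost :: "'a graph \<Rightarrow> 'a graph \<Rightarrow> nat" where
  "DegCost G H = (\<Sum>u\<in>verts H. degree G u)"

definition steiner_tree :: "'a graph \<Rightarrow> 'a set \<Rightarrow> 'a graph \<Rightarrow> bool" where
  "steiner_tree G Ts T \<longleftrightarrow> subgraph T G \<and> is_tree T \<and> Ts \<subseteq> verts T"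

definition q_star :: "'a graph \<Rightarrow> 'a set \<Rightarrow> nat" where
  "q_star G Ts = Min {Cost G T | T. steiner_tree G Ts T}"

definition DegCost_star :: "'a graph \<Rightarrow> 'a set \<Rightarrow> nat" where
  "DegCost_star G Ts = Min {DegCost G T | T. steiner_tree G Ts T}"

end

theory Submission
  imports Defs
begin

text \<open>Let \<open>T\<close> be a Steiner tree of minimum \<open>Cost\<close>, with vertex set \<open>S\<close>. The graph
  \<open>H\<close> on \<open>N[S]\<close> formed by the edges of \<open>G\<close> meeting \<open>S\<close> is a subgraph of \<open>G\<close>, so
  \<open>|E(H)| \<le> \<ell> |N[S]| = \<ell> q*(\<T>)\<close>. Every edge counted in \<open>DegCost(T)\<close> lies in \<open>H\<close>
  and is counted at most twice, so \<open>DegCost*(\<T>) \<le> DegCost(T) \<le> 2 |E(H)|\<close>.\<close>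

lemma wf_graph_edges_subset_Pow: "wf_graph G \<Longrightarrow> edges G \<subseteq> Pow (verts G)"
  unfolding wf_graph_def by fastforce

lemma wf_graph_finite_edges: "wf_graph G \<Longrightarrow> finite (edges G)"
  using wf_graph_edges_subset_Pow[of G] unfolding wf_graph_def
  by (meson finite_Pow_iff finite_subset)

lemma wf_graph_card_edge: "wf_graph G \<Longrightarrow> e \<in> edges G \<Longrightarrow> card e = 2"
  unfolding wf_graph_def by fastforce

lemma degree_eq_card_incident_edges:
  assumes "wf_graph G"
  shows "degree G u = card {e \<in> edges G. u \<in> e}"
proof -
  have "bij_betw (\<lambda>v. {u, v}) {v. {u, v} \<in> edges G} {e \<in> edges G. u \<in> e}"
  proof (rule bij_betwI')
    fix e assume e: "e \<in> {e \<in> edges G. u \<in> e}"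
    then obtain a b where "e = {a, b}" using assms unfolding wf_graph_def by blast
    with e show "\<exists>v\<in>{v. {u, v} \<in> edges G}. e = {u, v}"
      by (auto simp: insert_commute)
  qed (auto simp: doubleton_eq_iff)
  then show ?thesis unfolding degree_def by (rule bij_betw_same_card)
qed

lemma sum_degree_le_twice_card_edges_meeting:
  assumes "wf_graph G" and "finite S"
  shows "(\<Sum>u\<in>S. degree G u) \<le> 2 * card {e \<in> edges G. e \<inter> S \<noteq> {}}"
proof -
  define E where "E = {e \<in> edges G. e \<inter> S \<noteq> {}}"
  have "finite E" unfolding E_def using wf_graph_finite_edges[OF assms(1)] by auto
  have "(\<Sum>u\<in>S. degree G u) = (\<Sum>u\<in>S. card {e \<in> E. u \<in> e})"
    unfolding degree_eq_card_incident_edges[OF assms(1)]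
    by (rule sum.cong) (auto simp: E_def intro!: arg_cong[where f = card])
  also have "\<dots> = (\<Sum>u\<in>S. \<Sum>e\<in>E. if u \<in> e then 1 else 0)"
    using \<open>finite E\<close> by (simp add: sum.If_cases Int_def conj_commute)
  also have "\<dots> = (\<Sum>e\<in>E. \<Sum>u\<in>S. if u \<in> e then 1 else 0)"
    by (rule sum.swap)
  also have "\<dots> = (\<Sum>e\<in>E. card (S \<inter> e))"
    using assms(2) by (simp add: sum.If_cases Int_def)
  also have "\<dots> \<le> (\<Sum>e\<in>E. 2)"
  proof (rule sum_mono)
    fix e assume "e \<in> E"
    then have "card e = 2" using wf_graph_card_edge[OF assms(1)] unfolding E_def by auto
    then show "card (S \<inter> e) \<le> 2"
      by (metis card_mono inf_le2 card.infinite zero_neq_numeral)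
  qed
  finally show ?thesis unfolding E_def by simp
qed

definition nbhd_graph :: "'a graph \<Rightarrow> 'a set \<Rightarrow> 'a graph" where
  "nbhd_graph G S = ((\<Union>u\<in>S. closed_nbhd G u), {e \<in> edges G. e \<inter> S \<noteq> {}})"

lemma subgraph_nbhd_graph:
  assumes G: "wf_graph G" and S: "S \<subseteq> verts G"
  shows "subgraph (nbhd_graph G S) G"
proof -
  let ?N = "\<Union>u\<in>S. closed_nbhd G u"
  have "?N \<subseteq> verts G"
    using S wf_graph_edges_subset_Pow[OF G] unfolding closed_nbhd_def by auto
  moreover have "\<exists>u v. e = {u, v} \<and> u \<noteq> v \<and> u \<in> ?N \<and> v \<in> ?N"
    if e: "e \<in> edges G" "e \<inter> S \<noteq> {}" for e
  proof -
    obtain a b where ab: "e = {a, b}" "a \<noteq> b" using e G unfolding wf_graph_def by blast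
    have "{b, a} \<in> edges G" using e ab by (simp add: insert_commute)
    then have "a \<in> ?N \<and> b \<in> ?N"
      using e ab unfolding closed_nbhd_def by auto
    with ab show ?thesis by blast
  qed
  ultimately show ?thesis
    using G unfolding subgraph_def wf_graph_def nbhd_graph_def by (auto intro: finite_subset)
qed

lemma DegCost_le_twice_card_edges_nbhd_graph:
  assumes "wf_graph G" and "subgraph T G"
  shows "DegCost G T \<le> 2 * card (edges (nbhd_graph G (verts T)))"
  using sum_degree_le_twice_card_edges_meeting[OF assms(1)] assms(2)
  unfolding DegCost_def nbhd_graph_def subgraph_def wf_graph_def by simp

lemma Cost_eq_card_verts_nbhd_graph: "Cost G T = card (verts (nbhd_graph G (verts T)))"
  unfolding Cost_def nbhd_graph_def by simp

lemma DegCost_le_twice_density_Cost: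
  fixes \<G> :: "'a graph set" and l :: real
  assumes "hereditary \<G>"
    and "\<forall>G\<in>\<G>. real (card (edges G)) \<le> l * real (card (verts G))"
    and "G \<in> \<G>" and "subgraph T G"
  shows "real (DegCost G T) \<le> 2 * l * real (Cost G T)"
proof -
  have G: "wf_graph G" using assms(1,3) unfolding hereditary_def by blast
  have "verts T \<subseteq> verts G" using assms(4) unfolding subgraph_def by blast
  then have "nbhd_graph G (verts T) \<in> \<G>"
    using subgraph_nbhd_graph[OF G] assms(1,3) unfolding hereditary_def by blast
  then have "real (card (edges (nbhd_graph G (verts T)))) \<le> l * real (Cost G T)"
    using assms(2) unfolding Cost_eq_card_verts_nbhd_graph by blast
  moreover have "real (DegCost G T) \<le> 2 * real (card (edges (nbhd_graph G (verts T))))"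
    using DegCost_le_twice_card_edges_nbhd_graph[OF G assms(4)] by linarith
  ultimately show ?thesis by linarith
qed

lemma finite_steiner_trees:
  assumes "wf_graph G"
  shows "finite {T. steiner_tree G Ts T}"
proof (rule finite_subset)
  show "{T. steiner_tree G Ts T} \<subseteq> Pow (verts G) \<times> Pow (edges G)"
    unfolding steiner_tree_def subgraph_def by auto
  show "finite (Pow (verts G) \<times> Pow (edges G))"
    using assms wf_graph_finite_edges[OF assms] unfolding wf_graph_def by auto
qed

lemma q_star_attained:
  assumes "wf_graph G" and "\<exists>T. steiner_tree G Ts T"
  obtains T where "steiner_tree G Ts T" and "Cost G T = q_star G Ts"
proof -
  have "finite {Cost G T | T. steiner_tree G Ts T}"
    using finite_image_set[OF finite_steiner_trees[OF assms(1)]] by blast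
  then have "q_star G Ts \<in> {Cost G T | T. steiner_tree G Ts T}"
    unfolding q_star_def using assms(2) by (intro Min_in) auto
  then show ?thesis using that by auto
qed

lemma DegCost_star_le:
  assumes "wf_graph G" and "steiner_tree G Ts T"
  shows "DegCost_star G Ts \<le> DegCost G T"
proof -
  have "finite {DegCost G T | T. steiner_tree G Ts T}"
    using finite_image_set[OF finite_steiner_trees[OF assms(1)]] by blast
  then show ?thesis unfolding DegCost_star_def using assms(2) by (intro Min_le) (auto, metis prod.collapse)
qed

theorem proposition1:
  fixes \<G> :: "'a graph set" and l :: real
  assumes "hereditary \<G>"
    and "\<forall>G\<in>\<G>. real (card (edges G)) \<le> l * real (card (verts G))"
    and "G \<in> \<G>"
    and "Ts \<subseteq> verts G"
    and "\<exists>T. steiner_tree G Ts T"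
  shows "real (DegCost_star G Ts) \<le> 2 * l * real (q_star G Ts)"
proof -
  have G: "wf_graph G" using assms(1,3) unfolding hereditary_def by blast
  obtain T where T: "steiner_tree G Ts T" and "Cost G T = q_star G Ts"
    using q_star_attained[OF G assms(5)] .
  have "real (DegCost_star G Ts) \<le> real (DegCost G T)"
    using DegCost_star_le[OF G T] by simp
  also have "\<dots> \<le> 2 * l * real (Cost G T)"
    using DegCost_le_twice_density_Cost[OF assms(1-3)] T unfolding steiner_tree_def by blast
  finally show ?thesis using \<open>Cost G T = q_star G Ts\<close> by simp
qed

end
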